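(* Let $m$ be a positive integer and let $d(m)$ denote the number of positive divisors of $m$. Let $b_1,\ldots,b_m$ be complex numbers satisfying $$\sum_{k=1}^{m} b_k\, k^{r}=0\qquad\text{for every integer } r \text{ with } 0\le r\le d(m)-1 .$$ Define $$Z_m(s)=\sum_{n=0}^{\infty}\ \sum_{k=1}^{m}\frac{b_k}{(mn+k)^s},$$ where the series is summed over $n$, each inner sum over $k=1,\ldots,m$ being taken in full. Then this series over $n$ converges for every complex $s$ with $\operatorname{Re}(s)>2-d(m)$, and $Z_m(s)$ is analytic in the half-plane $\operatorname{Re}(s)>2-d(m)$.
   Context: For $x>0$ and complex $s$, $x^{-s}=e^{-s\log x}$ with the real logarithm. $d(m)$ is the number of positive integer divisors of $m$. *)

theory Defs
  imports "HOL-Analysis.Analysis"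
begin

definition num_divisors :: "nat \<Rightarrow> nat" where
  "num_divisors m = card {k. k dvd m}"

end

(* Expand (mn + k) powr -s by Taylor's formula about mn to order D = d(m). The vanishing
   moments of b annihilate the Taylor polynomial, so the n-th term is bounded by the remainder,
   of size (|s| + D)^D (mn) powr -(Re s + D); on Re s > 2 - D this is O(1/n^2) locally
   uniformly in s, and the Weierstrass M-test gives convergence and analyticity. *)

theory Submission imports Defs "HOL-Complex_Analysis.Complex_Analysis" begin

definition shifted_powr_deriv :: "real \<Rightarrow> complex \<Rightarrow> nat \<Rightarrow> complex \<Rightarrow> complex" where
  "shifted_powr_deriv x s i w = (\<Prod>j<i. - s - of_nat j) * (of_real x + w) powr (- s - of_nat i)"

lemma norm_prod_minus_shifts_le: "cmod (\<Prod>j<D. - s - of_nat j) \<le> (cmod s + D) ^ D"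
proof -
  have "cmod (\<Prod>j<D. - s - of_nat j) = (\<Prod>j<D. cmod (- s - of_nat j))"
    by (simp add: prod_norm)
  also have "\<dots> \<le> (\<Prod>j<D. cmod s + D)"
  proof (rule prod_mono)
    fix j assume "j \<in> {..<D}"
    then have "cmod (- s - of_nat j) \<le> cmod s + j"
      by (metis norm_minus_cancel norm_of_nat norm_triangle_ineq4)
    with \<open>j \<in> {..<D}\<close> show "0 \<le> cmod (- s - of_nat j) \<and> cmod (- s - of_nat j) \<le> cmod s + D"
      by auto
  qed
  finally show ?thesis by simp
qed

lemma has_field_derivative_shifted_powr_deriv:
  assumes "of_real x + w \<notin> \<real>\<^sub>\<le>\<^sub>0"
  shows "(shifted_powr_deriv x s i has_field_derivative shifted_powr_deriv x s (Suc i) w) (at w)"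
proof -
  have "((\<lambda>w. of_real x + w) has_field_derivative 1) (at w)"
    by (auto intro!: derivative_eq_intros)
  from DERIV_chain2[OF has_field_derivative_powr[OF assms, of "- s - of_nat i"] this]
  have "((\<lambda>w. (of_real x + w) powr (- s - of_nat i)) has_field_derivative
          (- s - of_nat i) * (of_real x + w) powr (- s - of_nat i - 1) * 1) (at w)" .
  from DERIV_cmult[OF this, of "\<Prod>j<i. - s - of_nat j"] show ?thesis
    unfolding shifted_powr_deriv_def by (simp add: algebra_simps)
qed

lemma norm_shifted_powr_deriv_le:
  assumes "x > 0" "t \<ge> 0" "Re s + D \<ge> 0"
  shows "cmod (shifted_powr_deriv x s D (of_real t)) \<le> (cmod s + D) ^ D * x powr - (Re s + D)"
proof -
  have "cmod (shifted_powr_deriv x s D (of_real t))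
        = cmod (\<Prod>j<D. - s - of_nat j) * (x + t) powr (- Re s - D)"
    using assms by (simp add: shifted_powr_deriv_def norm_mult norm_powr_real_powr
                    del: of_real_add add: of_real_add[symmetric])
  also have "\<dots> \<le> (cmod s + D) ^ D * x powr - (Re s + D)"
  proof (rule mult_mono[OF norm_prod_minus_shifts_le])
    show "(x + t) powr (- Re s - D) \<le> x powr - (Re s + D)"
      using assms powr_mono2'[of "- (Re s + D)" x "x + t"] by simp
  qed auto
  finally show ?thesis .
qed

lemma shifted_powr_Taylor_bound:
  assumes "x > 0" "t \<ge> 0" "Re s + D \<ge> 0" "D \<ge> 1"
  shows "cmod ((of_real x + of_real t) powr (- s)
           - (\<Sum>i<D. shifted_powr_deriv x s i 0 * of_real t ^ i / fact i))
         \<le> (cmod s + D) ^ D * x powr - (Re s + D) * t ^ D / fact (D - 1)"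
proof -
  define S where "S = complex_of_real ` {0..}"
  have "convex S"
    unfolding S_def by (intro convex_linear_image) (auto intro: bounded_linear.linear bounded_linear_of_real)
  moreover have "(shifted_powr_deriv x s i has_field_derivative shifted_powr_deriv x s (Suc i) w) (at w within S)"
    if "w \<in> S" for i w
  proof -
    obtain u where "u \<ge> 0" "w = of_real u" using \<open>w \<in> S\<close> by (auto simp: S_def)
    then have "of_real x + w \<notin> \<real>\<^sub>\<le>\<^sub>0"
      using \<open>x > 0\<close> by (simp add: complex_nonpos_Reals_iff)
    then show ?thesis
      by (rule has_field_derivative_at_within[OF has_field_derivative_shifted_powr_deriv])
  qed
  moreover have "cmod (shifted_powr_deriv x s (Suc (D - 1)) w) \<le> (cmod s + D) ^ D * x powr - (Re s + D)"
    if "w \<in> S" for w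
    using that assms norm_shifted_powr_deriv_le[of x _ s D] by (auto simp: S_def)
  moreover have "0 \<in> S" "of_real t \<in> S"
    using \<open>t \<ge> 0\<close> by (auto simp: S_def)
  ultimately have "cmod (shifted_powr_deriv x s 0 (of_real t)
          - (\<Sum>i\<le>D - 1. shifted_powr_deriv x s i 0 * (of_real t - 0) ^ i / fact i))
        \<le> (cmod s + D) ^ D * x powr - (Re s + D) * cmod (of_real t - 0) ^ Suc (D - 1) / fact (D - 1)"
    by (rule complex_Taylor[where f = "shifted_powr_deriv x s" and n = "D - 1"])
  moreover have "{..D - 1} = {..<D}" using \<open>D \<ge> 1\<close> by auto
  ultimately show ?thesis
    using assms by (simp add: shifted_powr_deriv_def)
qed

lemma norm_moment_cancelled_powr_sum_le:
  fixes b :: "nat \<Rightarrow> complex"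
  assumes "x > 0" "D \<ge> 1" "Re s + D \<ge> 0"
    and moments: "\<And>r. r < D \<Longrightarrow> (\<Sum>k=1..m. b k * of_nat k ^ r) = 0"
  shows "norm (\<Sum>k=1..m. b k / (of_real x + of_nat k) powr s)
         \<le> (\<Sum>k=1..m. norm (b k)) * real m ^ D / fact (D - 1) * (cmod s + D) ^ D * x powr - (Re s + D)"
proof -
  define C where "C = (cmod s + D) ^ D * x powr - (Re s + D) / fact (D - 1)"
  define T where "T k = (\<Sum>i<D. shifted_powr_deriv x s i 0 * of_nat k ^ i / fact i)" for k :: nat
  have T_cancels: "(\<Sum>k=1..m. b k * T k) = 0"
  proof -
    have "(\<Sum>k=1..m. b k * T k)
          = (\<Sum>i<D. shifted_powr_deriv x s i 0 / fact i * (\<Sum>k=1..m. b k * of_nat k ^ i))"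
      unfolding T_def by (simp add: sum_distrib_left sum_distrib_right algebra_simps) (rule sum.swap)
    also have "\<dots> = 0" using moments by simp
    finally show ?thesis .
  qed
  have remainder: "norm ((of_real x + of_nat k) powr (- s) - T k) \<le> C * real m ^ D" if "k \<in> {1..m}" for k
  proof -
    have "norm ((of_real x + of_nat k) powr (- s) - T k) \<le> C * real k ^ D"
      using shifted_powr_Taylor_bound[of x "real k" s D] assms by (simp add: T_def C_def)
    also have "\<dots> \<le> C * real m ^ D"
      using that by (intro mult_left_mono power_mono) (auto simp: C_def)
    finally show ?thesis .
  qed
  have "(\<Sum>k=1..m. b k / (of_real x + of_nat k) powr s)
        = (\<Sum>k=1..m. b k * ((of_real x + of_nat k) powr (- s) - T k))"
    using T_cancels by (simp add: powr_minus divide_inverse right_diff_distrib sum_subtractf)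
  also have "norm \<dots> \<le> (\<Sum>k=1..m. norm (b k) * (C * real m ^ D))"
    by (rule order_trans[OF norm_sum sum_mono]) (simp add: norm_mult mult_left_mono remainder)
  also have "\<dots> = (\<Sum>k=1..m. norm (b k)) * (C * real m ^ D)"
    by (rule sum_distrib_right[symmetric])
  finally show ?thesis
    by (simp add: C_def field_simps)
qed

lemma norm_moment_powr_sum_le_inverse_square:
  fixes b :: "nat \<Rightarrow> complex"
  assumes "m > 0" "n \<ge> 1" "D \<ge> 1" "Re s + D \<ge> 2"
    and moments: "\<And>r. r < D \<Longrightarrow> (\<Sum>k=1..m. b k * of_nat k ^ r) = 0"
  shows "norm (\<Sum>k=1..m. b k / of_nat (m * n + k) powr s)
         \<le> (\<Sum>k=1..m. norm (b k)) * real m ^ D / fact (D - 1) * (cmod s + D) ^ D / real n ^ 2"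
proof -
  have mn: "1 \<le> real n" "real n \<le> real (m * n)" using assms by auto
  then have mn1: "1 \<le> real (m * n)" by linarith
  have "real (m * n) powr - (Re s + D) \<le> real (m * n) powr - 2"
    by (rule powr_mono[OF _ mn1]) (use assms in simp)
  also have "\<dots> \<le> real n powr - 2"
    using mn by (intro powr_mono2') auto
  also have "\<dots> = 1 / real n ^ 2"
    using mn by (simp add: powr_minus powr_numeral divide_inverse)
  finally have decay: "real (m * n) powr - (Re s + D) \<le> 1 / real n ^ 2" .
  have "norm (\<Sum>k=1..m. b k / of_nat (m * n + k) powr s)
        \<le> (\<Sum>k=1..m. norm (b k)) * real m ^ D / fact (D - 1) * (cmod s + D) ^ D * real (m * n) powr - (Re s + D)"
    using norm_moment_cancelled_powr_sum_le[where x = "real (m * n)"] assms mn1 by simp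
  also have "\<dots> \<le> (\<Sum>k=1..m. norm (b k)) * real m ^ D / fact (D - 1) * (cmod s + D) ^ D * (1 / real n ^ 2)"
    by (intro mult_left_mono decay) (auto intro!: divide_nonneg_nonneg mult_nonneg_nonneg sum_nonneg)
  finally show ?thesis by simp
qed

lemma summable_analytic_on_suminf_local_bound:
  fixes f :: "nat \<Rightarrow> complex \<Rightarrow> complex"
  assumes S: "open S" and hol: "\<And>n. f n holomorphic_on S"
    and bound: "\<And>x. x \<in> S \<Longrightarrow> \<exists>d h. 0 < d \<and> summable h \<and>
                    (\<forall>\<^sub>F n in sequentially. \<forall>y\<in>ball x d \<inter> S. norm (f n y) \<le> h n)"
  shows "(\<forall>s\<in>S. summable (\<lambda>n. f n s)) \<and> (\<lambda>s. \<Sum>n. f n s) analytic_on S"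
proof -
  have "(f n has_field_derivative deriv (f n) x) (at x)" if "x \<in> S" for n x
    using hol S that by (rule holomorphic_derivI)
  from series_and_derivative_comparison_local[OF S this bound]
  obtain g g' where g: "\<And>x. x \<in> S \<Longrightarrow> (\<lambda>n. f n x) sums g x \<and> (g has_field_derivative g' x) (at x)"
    by blast
  have "((\<lambda>s. \<Sum>n. f n s) has_field_derivative g' x) (at x)" if "x \<in> S" for x
    using g[OF that] S that
    by (rule has_field_derivative_transform_within_open[OF conjunct2]) (use g in \<open>auto simp: sums_iff\<close>)
  then have "(\<lambda>s. \<Sum>n. f n s) holomorphic_on S"
    by (meson field_differentiable_at_within field_differentiable_def holomorphic_on_def)
  with g S show ?thesis
    by (auto simp: analytic_on_open sums_iff)
qed

theorem moment_series_summable_analytic: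
  fixes b :: "nat \<Rightarrow> complex"
  assumes "m > 0" "D \<ge> 1"
    and moments: "\<And>r. r < D \<Longrightarrow> (\<Sum>k=1..m. b k * of_nat k ^ r) = 0"
  defines "S \<equiv> {s. Re s > 2 - real D}"
  shows "(\<forall>s\<in>S. summable (\<lambda>n. \<Sum>k=1..m. b k / of_nat (m * n + k) powr s)) \<and>
         (\<lambda>s. \<Sum>n. \<Sum>k=1..m. b k / of_nat (m * n + k) powr s) analytic_on S"
proof (rule summable_analytic_on_suminf_local_bound)
  show "open S" unfolding S_def by (rule open_halfspace_Re_gt)
  show "(\<lambda>s. \<Sum>k=1..m. b k / of_nat (m * n + k) powr s) holomorphic_on S" for n
    by (intro holomorphic_intros) auto
  fix x assume "x \<in> S"
  define K where "K = (\<Sum>k=1..m. norm (b k)) * real m ^ D / fact (D - 1) * (cmod x + 1 + D) ^ D"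
  have "norm (\<Sum>k=1..m. b k / of_nat (m * n + k) powr y) \<le> K / real n ^ 2"
    if "n \<ge> 1" "y \<in> ball x 1 \<inter> S" for n y
  proof -
    have "cmod y \<le> cmod x + 1"
      using that norm_triangle_sub[of y x] by (auto simp: dist_norm norm_minus_commute)
    then have "(cmod y + D) ^ D \<le> (cmod x + 1 + D) ^ D"
      by (intro power_mono) auto
    then have "(\<Sum>k=1..m. norm (b k)) * real m ^ D / fact (D - 1) * (cmod y + D) ^ D / real n ^ 2
               \<le> K / real n ^ 2"
      unfolding K_def
      by (intro divide_right_mono mult_left_mono) (auto intro!: divide_nonneg_nonneg mult_nonneg_nonneg sum_nonneg)
    moreover have "norm (\<Sum>k=1..m. b k / of_nat (m * n + k) powr y)
        \<le> (\<Sum>k=1..m. norm (b k)) * real m ^ D / fact (D - 1) * (cmod y + D) ^ D / real n ^ 2"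
      by (rule norm_moment_powr_sum_le_inverse_square) (use assms that in \<open>auto simp: S_def\<close>)
    ultimately show ?thesis by linarith
  qed
  moreover have "summable (\<lambda>n. K / real n ^ 2)"
    using inverse_power_summable[of 2, where 'a=real] summable_mult[of _ K]
    by (simp add: divide_inverse)
  ultimately show "\<exists>d h. 0 < d \<and> summable h \<and>
      (\<forall>\<^sub>F n in sequentially. \<forall>y\<in>ball x d \<inter> S. norm (\<Sum>k=1..m. b k / of_nat (m * n + k) powr y) \<le> h n)"
    by (intro exI[of _ "1::real"] exI[of _ "\<lambda>n. K / real n ^ 2"] conjI)
       (auto intro: eventually_mono[OF eventually_ge_at_top[of "1::nat"]])
qed

lemma num_divisors_pos: "m > 0 \<Longrightarrow> num_divisors m > 0"
  unfolding num_divisors_def by (auto simp: card_gt_0_iff intro: exI[of _ 1])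

theorem theorem1:
  fixes m :: nat and b :: "nat \<Rightarrow> complex"
  assumes "m > 0"
    and "\<And>r::nat. r \<le> num_divisors m - 1 \<Longrightarrow> (\<Sum>k=1..m. b k * of_nat k ^ r) = 0"
  shows "(\<forall>s. Re s > 2 - real (num_divisors m) \<longrightarrow>
           summable (\<lambda>n. \<Sum>k=1..m. b k / of_nat (m * n + k) powr s)) \<and>
         ((\<lambda>s. \<Sum>n. \<Sum>k=1..m. b k / of_nat (m * n + k) powr s)
           analytic_on {s. Re s > 2 - real (num_divisors m)})"
  using moment_series_summable_analytic[of m "num_divisors m" b] assms num_divisors_pos[of m]
  by auto

end
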